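(* Consider a Kepler billiard in the plane: a particle moves under a Kepler(-Coulomb) potential centered at $F$ and is elastically reflected at a wall $\mathbf{K}$ which is either an ellipse or a branch of a hyperbola with foci $F$ and $F'$. Choose coordinates with $F'=(0,0)$ and $F=(-2c_{\mathbf{K}},0)$, and let $a_{\mathbf{K}}$ be the semi-major axis of $\mathbf{K}$. Fix a non-zero energy, so that the Keplerian arcs are arcs of conics with focus $F$ and common semi-major axis $a$, and let $F_1,F_2,\dots$ be the second foci of the successive Keplerian arcs along a billiard trajectory; these lie on a circle centered at $F'$ of radius $R$. Then there are real numbers $x_0=x_0(a,R)$ and $r_0=r_0(a,R)$, depending only on $\mathbf{K}$ and given by quadratic functions of $a$ and $R$, such that every line $\ell(F_iF_{i+1})$ through consecutive second foci is tangent to the circle with center $(x_0,0)$ and radius $|r_0|$ (the foci-caustic circle).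
   Context: Elastic reflection means the velocity is reflected with respect to the tangent line to $\mathbf{K}$ at the impact point, preserving energy; the semi-major axis $a$ of the Keplerian orbit is preserved under reflections. The second focus of an elliptic Keplerian orbit $\{P:|PF|+|PF_i|=2a\}$ is $F_i$; for hyperbolic orbits it is the other focus of the hyperbola containing the arc. It is a known fact that the second foci along a trajectory all lie on a circle centered at $F'$; its radius $R$ is a conserved quantity. *)

theory Defs
  imports "HOL-Analysis.Analysis"
begin

text \<open>Reflection of a vector v with respect to the line orthogonal to n (n a normal vector of
  that line); for n a normal of the wall at the impact point this is elastic reflection of the
  velocity with respect to the tangent line of the wall.\<close>
definition reflect_normal :: "real^2 \<Rightarrow> real^2 \<Rightarrow> real^2" where
  "reflect_normal n v = v - (2 * (v \<bullet> n) / (n \<bullet> n)) *\<^sub>R n"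

text \<open>The wall K with foci F and F' = 0 and (signed) parameter aK:
  s = 1: the ellipse |PF| + |PF'| = 2 aK;
  s = -1: the hyperbola branch |PF| - |PF'| = 2 aK (aK of either sign selects the branch).\<close>
definition wall :: "real^2 \<Rightarrow> real \<Rightarrow> real \<Rightarrow> (real^2) set" where
  "wall F s aK = {P. dist P F + s * dist P 0 = 2 * aK}"

text \<open>Normal vector of the wall at P (gradient of the defining function).\<close>
definition wall_normal :: "real^2 \<Rightarrow> real \<Rightarrow> real^2 \<Rightarrow> real^2" where
  "wall_normal F s P = sgn (P - F) + s *\<^sub>R sgn P"

text \<open>Keplerian orbit with focus F (the Kepler centre), second focus F1 and signed semi-major
  axis a (a > 0: elliptic orbit |QF| + |QF1| = 2a; a < 0: hyperbolic orbit, the branch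
  |QF1| - |QF| = 2|a| around the attracting centre F).\<close>
definition kepler_orbit :: "real^2 \<Rightarrow> real^2 \<Rightarrow> real \<Rightarrow> (real^2) set" where
  "kepler_orbit F F1 a = {Q. dist Q F + sgn a * dist Q F1 = 2 * a}"

definition kepler_normal :: "real^2 \<Rightarrow> real^2 \<Rightarrow> real \<Rightarrow> real^2 \<Rightarrow> real^2" where
  "kepler_normal F F1 a Q = sgn (Q - F) + sgn a *\<^sub>R sgn (Q - F1)"

text \<open>F1 is the second focus of the (non-degenerate) Keplerian orbit with focus F and
  semi-major axis a which passes through P with velocity v (v tangent to the orbit at P).\<close>
definition is_second_focus :: "real^2 \<Rightarrow> real \<Rightarrow> real^2 \<Rightarrow> real^2 \<Rightarrow> real^2 \<Rightarrow> bool" where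
  "is_second_focus F a P v F1 \<longleftrightarrow>
     P \<in> kepler_orbit F F1 a \<and> P \<noteq> F \<and> P \<noteq> F1 \<and>
     kepler_normal F F1 a P \<noteq> 0 \<and> v \<noteq> 0 \<and> v \<bullet> kepler_normal F F1 a P = 0"

text \<open>A Kepler billiard trajectory in the wall (F, s, aK) at energy level a:
  P i is the i-th impact point, v i the velocity just before the i-th impact, Fs i the second
  focus of the i-th Keplerian arc (the arc arriving at P i); the reflected arc leaving P i
  has second focus Fs (Suc i).\<close>
definition billiard_traj ::
  "real^2 \<Rightarrow> real \<Rightarrow> real \<Rightarrow> real \<Rightarrow> (nat \<Rightarrow> real^2) \<Rightarrow> (nat \<Rightarrow> real^2) \<Rightarrow> (nat \<Rightarrow> real^2) \<Rightarrow> bool"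
  where
  "billiard_traj F s aK a P v Fs \<longleftrightarrow>
     (\<forall>i. P i \<in> wall F s aK \<and>
          is_second_focus F a (P i) (v i) (Fs i) \<and>
          is_second_focus F a (P i) (reflect_normal (wall_normal F s (P i)) (v i)) (Fs (Suc i)))"

definition quad2 :: "real \<times> real \<times> real \<times> real \<times> real \<times> real \<Rightarrow> real \<Rightarrow> real \<Rightarrow> real" where
  "quad2 k a R = (case k of (k1, k2, k3, k4, k5, k6) \<Rightarrow>
      k1 * a\<^sup>2 + k2 * a * R + k3 * R\<^sup>2 + k4 * a + k5 * R + k6)"

end

theory Submission
  imports Defs
begin

text \<open>
  Let Q be an impact point and A, B the second foci of the arcs arriving at and leaving Q.
  Both arcs pass through Q and have the same semi-major axis a, so
  |QA| = |QB| = |2a - |QF||; only this conservation of a is used, not the reflection law.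
  Since moreover |A| = |B| = R, the line AB is the radical axis Q \<bullet> x = k of the circle of
  radius R about F' and the circle about Q through A and B. On the wall |QF| = 2 aK - s|Q|,
  so both the first coordinate of Q and k are affine in |Q|; for the right choice of x0 the
  distance |x0 Q_1 - k| / |Q| from (x0, 0) to the line AB no longer depends on Q.
\<close>

lemma infdist_hyperplane:
  fixes x n :: "'a::real_inner"
  assumes "n \<noteq> 0"
  shows "infdist x {y. n \<bullet> y = k} = \<bar>n \<bullet> x - k\<bar> / norm n"
proof (rule antisym)
  define p where "p = x - ((n \<bullet> x - k) / (n \<bullet> n)) *\<^sub>R n"
  have "n \<bullet> p = k"
    using assms by (simp add: p_def inner_diff_right)
  moreover have "dist x p = \<bar>n \<bullet> x - k\<bar> / norm n"
    using assms by (simp add: p_def dist_norm power2_norm_eq_inner [symmetric] power2_eq_square)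
  ultimately show "infdist x {y. n \<bullet> y = k} \<le> \<bar>n \<bullet> x - k\<bar> / norm n"
    by (metis (mono_tags) infdist_le mem_Collect_eq)
next
  have "\<bar>n \<bullet> x - k\<bar> / norm n \<le> dist x y" if "n \<bullet> y = k" for y
  proof -
    have "\<bar>n \<bullet> x - k\<bar> = \<bar>n \<bullet> (x - y)\<bar>"
      using that by (simp add: inner_diff_right)
    also have "\<dots> \<le> norm n * dist x y"
      by (simp add: dist_norm Cauchy_Schwarz_ineq2)
    finally show ?thesis
      using assms by (simp add: divide_le_eq mult.commute)
  qed
  moreover have "{y. n \<bullet> y = k} \<noteq> {}"
    using assms by (metis (mono_tags) empty_iff hyperplane_eq_empty inner_commute)
  ultimately show "\<bar>n \<bullet> x - k\<bar> / norm n \<le> infdist x {y. n \<bullet> y = k}"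
    unfolding infdist_notempty [OF \<open>{y. n \<bullet> y = k} \<noteq> {}\<close>] by (blast intro: cINF_greatest)
qed

lemma affine_hull_pair_eq_hyperplane:
  fixes A B n :: "'a::euclidean_space"
  assumes "DIM('a) = 2" "A \<noteq> B" "n \<noteq> 0" "n \<bullet> A = k" "n \<bullet> B = k"
  shows "affine hull {A, B} = {x. n \<bullet> x = k}"
proof (rule affine_dim_equal)
  show "affine hull {A, B} \<subseteq> {x. n \<bullet> x = k}"
    using assms by (intro hull_minimal) (auto simp: affine_hyperplane)
  have "aff_dim {x. n \<bullet> x = k} = DIM('a) - 1"
    using assms(3) by (subst aff_dim_eq_hyperplane) (metis affine_hull_eq affine_hyperplane)
  then show "aff_dim (affine hull {A, B}) = aff_dim {x. n \<bullet> x = k}"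
    using assms(1,2) by simp
qed (auto simp: affine_hyperplane)

lemma inner_vector2: "(y :: real^2) \<bullet> vector [x1, x2] = y$1 * x1 + y$2 * x2"
  by (simp add: inner_vec_def sum_2)

lemma zero_notin_wall:
  assumes "aK\<^sup>2 \<noteq> c\<^sup>2"
  shows "0 \<notin> wall (vector [- 2 * c, 0]) s aK"
proof
  assume "0 \<in> wall (vector [- 2 * c, 0]) s aK"
  then have "\<bar>c\<bar> = aK"
    by (simp add: wall_def norm_vec_def L2_set_def sum_2 real_sqrt_mult)
  with assms show False
    by auto
qed

lemma wall_first_coordinate:
  assumes "Q \<in> wall (vector [- 2 * c, 0]) s aK" and "s\<^sup>2 = 1"
  shows "c * Q$1 = aK\<^sup>2 - c\<^sup>2 - s * aK * norm Q"
proof -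
  have "(dist Q (vector [- 2 * c, 0]))\<^sup>2 = (norm Q)\<^sup>2 + 4 * c * Q$1 + 4 * c\<^sup>2"
    unfolding dist_norm power2_norm_eq_inner
    by (simp add: inner_vec_def sum_2 power2_eq_square algebra_simps)
  moreover have "dist Q (vector [- 2 * c, 0]) = 2 * aK - s * norm Q"
    using assms(1) by (simp add: wall_def)
  moreover have "(2 * aK - s * norm Q)\<^sup>2 = 4 * aK\<^sup>2 - 4 * s * aK * norm Q + (norm Q)\<^sup>2"
    using assms(2) by (simp add: power2_diff power_mult_distrib)
  ultimately show ?thesis
    by simp
qed

lemma kepler_orbit_dist_second_focus:
  assumes "Q \<in> kepler_orbit F F1 a" and "a \<noteq> 0"
  shows "dist Q F1 = \<bar>2 * a - dist Q F\<bar>"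
proof -
  have "sgn a * dist Q F1 = 2 * a - dist Q F"
    using assms(1) by (simp add: kepler_orbit_def)
  then have "\<bar>sgn a * dist Q F1\<bar> = \<bar>2 * a - dist Q F\<bar>"
    by simp
  then show ?thesis
    using assms(2) by (simp add: abs_mult)
qed

definition caustic_center :: "real \<Rightarrow> real \<Rightarrow> real \<Rightarrow> real \<Rightarrow> real" where
  "caustic_center c aK a R = c * (R\<^sup>2 - 4 * (a - aK)\<^sup>2) / (2 * (aK\<^sup>2 - c\<^sup>2))"

definition caustic_radius :: "real \<Rightarrow> real \<Rightarrow> real \<Rightarrow> real \<Rightarrow> real" where
  "caustic_radius c aK a R = aK * (R\<^sup>2 - 4 * (a - aK)\<^sup>2) / (2 * (aK\<^sup>2 - c\<^sup>2)) - 2 * (a - aK)"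

lemma caustic_center_eq_quad2:
  "caustic_center c aK a R = quad2
     (- 2 * c / (aK\<^sup>2 - c\<^sup>2), 0, c / (2 * (aK\<^sup>2 - c\<^sup>2)), 4 * c * aK / (aK\<^sup>2 - c\<^sup>2), 0,
      - 2 * c * aK\<^sup>2 / (aK\<^sup>2 - c\<^sup>2)) a R"
proof -
  define D where "D = aK\<^sup>2 - c\<^sup>2"
  have "c * (R\<^sup>2 - 4 * (a - aK)\<^sup>2) / (2 * D) =
    quad2 (- 2 * c / D, 0, c / (2 * D), 4 * c * aK / D, 0, - 2 * c * aK\<^sup>2 / D) a R"
    by (cases "D = 0") (simp_all add: quad2_def power2_diff field_simps)
  then show ?thesis
    by (simp add: caustic_center_def D_def)
qed

lemma caustic_radius_eq_quad2:
  "caustic_radius c aK a R = quad2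
     (- 2 * aK / (aK\<^sup>2 - c\<^sup>2), 0, aK / (2 * (aK\<^sup>2 - c\<^sup>2)), 4 * aK\<^sup>2 / (aK\<^sup>2 - c\<^sup>2) - 2, 0,
      - 2 * aK ^ 3 / (aK\<^sup>2 - c\<^sup>2) + 2 * aK) a R"
proof -
  define D where "D = aK\<^sup>2 - c\<^sup>2"
  have "aK * (R\<^sup>2 - 4 * (a - aK)\<^sup>2) / (2 * D) - 2 * (a - aK) =
    quad2 (- 2 * aK / D, 0, aK / (2 * D), 4 * aK\<^sup>2 / D - 2, 0, - 2 * aK ^ 3 / D + 2 * aK) a R"
    by (cases "D = 0")
      (simp_all add: quad2_def power2_diff power2_eq_square power3_eq_cube field_simps)
  then show ?thesis
    by (simp add: caustic_radius_def D_def)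
qed

lemma caustic_center_offset_eq:
  assumes "aK\<^sup>2 \<noteq> c\<^sup>2" and "s\<^sup>2 = 1"
    and "c * q1 = aK\<^sup>2 - c\<^sup>2 - s * aK * r"
    and "2 * k = r\<^sup>2 + R\<^sup>2 - (2 * a - (2 * aK - s * r))\<^sup>2"
  shows "caustic_center c aK a R * q1 - k = - s * r * caustic_radius c aK a R"
proof -
  define M where "M = R\<^sup>2 - 4 * (a - aK)\<^sup>2"
  define D where "D = aK\<^sup>2 - c\<^sup>2"
  have "D \<noteq> 0"
    using assms(1) by (simp add: D_def)
  have "caustic_center c aK a R * q1 = M / (2 * D) * (D - s * aK * r)"
    using assms(3) by (simp add: caustic_center_def M_def D_def)
  also have "\<dots> = M / 2 - s * r * (aK * M / (2 * D))"
    using \<open>D \<noteq> 0\<close> by (simp add: field_simps)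
  finally have center: "caustic_center c aK a R * q1 = M / 2 - s * r * (aK * M / (2 * D))" .
  have "(2 * a - (2 * aK - s * r))\<^sup>2 = 4 * (a - aK)\<^sup>2 + 4 * s * (a - aK) * r + s\<^sup>2 * r\<^sup>2"
    by (simp add: power2_eq_square algebra_simps)
  with assms(2,4) have k: "k = M / 2 - 2 * s * (a - aK) * r"
    by (simp add: M_def field_simps)
  have radius: "caustic_radius c aK a R = aK * M / (2 * D) - 2 * (a - aK)"
    by (simp add: caustic_radius_def M_def D_def)
  show ?thesis
    unfolding center radius k by (simp add: algebra_simps)
qed

lemma infdist_caustic_center_line_second_foci:
  fixes Q A B :: "real^2"
  assumes "aK\<^sup>2 \<noteq> c\<^sup>2" and "s\<^sup>2 = 1" and "a \<noteq> 0"
    and Q_wall: "Q \<in> wall (vector [- 2 * c, 0]) s aK"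
    and Q_orbit_A: "Q \<in> kepler_orbit (vector [- 2 * c, 0]) A a"
    and Q_orbit_B: "Q \<in> kepler_orbit (vector [- 2 * c, 0]) B a"
    and "norm A = R" and "norm B = R" and "A \<noteq> B"
  shows "infdist (vector [caustic_center c aK a R, 0]) (affine hull {A, B}) =
    \<bar>caustic_radius c aK a R\<bar>"
proof -
  define k where "k = Q \<bullet> A"
  have "Q \<noteq> 0"
    using zero_notin_wall [OF assms(1)] Q_wall by blast
  have "dist Q (vector [- 2 * c, 0]) = 2 * aK - s * norm Q"
    using Q_wall by (simp add: wall_def)
  then have dist_A: "dist Q A = \<bar>2 * a - (2 * aK - s * norm Q)\<bar>"
    and "dist Q B = dist Q A"
    using kepler_orbit_dist_second_focus [OF Q_orbit_A \<open>a \<noteq> 0\<close>]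
      kepler_orbit_dist_second_focus [OF Q_orbit_B \<open>a \<noteq> 0\<close>] by simp_all
  then have "Q \<bullet> B = k"
    using assms(7,8) by (simp add: k_def dot_norm_neg dist_norm)
  then have line: "affine hull {A, B} = {x. Q \<bullet> x = k}"
    using \<open>Q \<noteq> 0\<close> \<open>A \<noteq> B\<close> by (intro affine_hull_pair_eq_hyperplane) (simp_all add: k_def)
  have "2 * k = (norm Q)\<^sup>2 + R\<^sup>2 - (2 * a - (2 * aK - s * norm Q))\<^sup>2"
    using dist_A assms(7) by (simp add: k_def dot_norm_neg dist_norm)
  with assms(1,2) wall_first_coordinate [OF Q_wall assms(2)]
  have identity: "caustic_center c aK a R * Q$1 - k = - s * norm Q * caustic_radius c aK a R"
    by (rule caustic_center_offset_eq)
  have "\<bar>s\<bar> = 1"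
    using assms(2) by (auto simp: power2_eq_1_iff)
  have "infdist (vector [caustic_center c aK a R, 0]) (affine hull {A, B}) =
      \<bar>Q \<bullet> vector [caustic_center c aK a R, 0] - k\<bar> / norm Q"
    unfolding line by (rule infdist_hyperplane [OF \<open>Q \<noteq> 0\<close>])
  also have "Q \<bullet> vector [caustic_center c aK a R, 0] - k = - s * norm Q * caustic_radius c aK a R"
    using identity by (simp add: inner_vector2 mult.commute)
  finally show ?thesis
    using \<open>\<bar>s\<bar> = 1\<close> \<open>Q \<noteq> 0\<close> by (simp add: abs_mult)
qed

theorem mainTheorem2:
  fixes c aK s :: real
  assumes c_pos: "c > 0"
    and wall_type: "(s = 1 \<and> c < aK) \<or> (s = -1 \<and> aK \<noteq> 0 \<and> \<bar>aK\<bar> < c)"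
  shows "\<exists>kx kr. \<forall>a R (P :: nat \<Rightarrow> real^2) v Fs.
           a \<noteq> 0 \<longrightarrow>
           billiard_traj (vector [- 2 * c, 0]) s aK a P v Fs \<longrightarrow>
           (\<forall>i. dist (Fs i) 0 = R) \<longrightarrow>
           (\<forall>i. Fs i \<noteq> Fs (Suc i) \<longrightarrow>
                infdist (vector [quad2 kx a R, 0]) (affine hull {Fs i, Fs (Suc i)}) = \<bar>quad2 kr a R\<bar>)"
proof -
  have "aK\<^sup>2 \<noteq> c\<^sup>2" and "s\<^sup>2 = 1"
    using c_pos wall_type by (auto simp: power2_eq_iff)
  then have "\<forall>a R (P :: nat \<Rightarrow> real^2) v Fs.
      a \<noteq> 0 \<longrightarrow>
      billiard_traj (vector [- 2 * c, 0]) s aK a P v Fs \<longrightarrow>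
      (\<forall>i. dist (Fs i) 0 = R) \<longrightarrow>
      (\<forall>i. Fs i \<noteq> Fs (Suc i) \<longrightarrow>
        infdist (vector [caustic_center c aK a R, 0]) (affine hull {Fs i, Fs (Suc i)}) =
          \<bar>caustic_radius c aK a R\<bar>)"
    by (auto simp: billiard_traj_def is_second_focus_def dist_norm
        intro!: infdist_caustic_center_line_second_foci)
  then show ?thesis
    unfolding caustic_center_eq_quad2 caustic_radius_eq_quad2 by blast
qed

end
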